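(* In the setting below, let $p,q\in X$ with $|S_p\cap S_q|=1$, $|S_p|=2$ and $|S_q|=n$, and let $r\in X$ with $S_r\ne S_p$, $S_r\ne S_q$ and $|S_r|\ge 2$. Then either $S_r\subseteq S_q\setminus S_p$ or $S_r=(S_p\setminus S_q)\cup(S_q\setminus S_p)$.
   Context: Setting: $E=\{e_0,\dots,e_n\}\subset\mathbb R^n$ is the vertex set of an $n$-simplex with $e_0+\cdots+e_n=0$, and $X\subset\mathbb R^n\setminus\{0\}$ is a finite set with $E\subseteq X$, no element of $X$ a positive multiple of another, such that every $n+1$ points of $X$ are in good position. (A finite set $A$ is in conical position if $0\notin\operatorname{conv}A$ and no point of $A$ lies in the positive hull—set of nonnegative linear combinations—of the other points; it is in good position otherwise.) For $p\in X$, the support $S_p$ is the minimal subset of $E$ whose positive hull contains $p$. *)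

theory Defs
  imports "HOL-Analysis.Analysis"
begin

definition pos_hull :: "'a::real_vector set \<Rightarrow> 'a set" where
  "pos_hull A = {y. \<exists>c. (\<forall>a\<in>A. 0 \<le> c a) \<and> y = (\<Sum>a\<in>A. c a *\<^sub>R a)}"

definition conical_position :: "'a::real_vector set \<Rightarrow> bool" where
  "conical_position A \<longleftrightarrow>
     0 \<notin> convex hull A \<and> (\<forall>a\<in>A. a \<notin> pos_hull (A - {a}))"

definition good_position :: "'a::real_vector set \<Rightarrow> bool" where
  "good_position A \<longleftrightarrow> \<not> conical_position A"

definition centered_simplex :: "'a::euclidean_space set \<Rightarrow> bool" where
  "centered_simplex E \<longleftrightarrow>
     finite E \<and> card E = DIM('a) + 1 \<and> \<not> affine_dependent E \<and> (\<Sum>e\<in>E. e) = 0"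

definition support :: "'a::real_vector set \<Rightarrow> 'a \<Rightarrow> 'a set" where
  "support E p = (THE S. S \<subseteq> E \<and> p \<in> pos_hull S \<and> (\<forall>T. T \<subset> S \<longrightarrow> p \<notin> pos_hull T))"

end

theory Submission
  imports Defs
begin

(* Every point x has coordinates with respect to E that are nonnegative with minimum 0; they are
   unique up to a common shift, because the only linear relation among the vertices is their sum,
   and the support of x is the set of vertices with positive coordinate.  Exchanging one or two
   vertices of E for points of X outside E gives n + 1 points whose linear relations form a line
   spanned by an explicit circuit; if the circuit has two positive and two negative entries, these
   points are in conical position, which the hypothesis forbids.  With S_p = {b, c} and
   S_q = E - {c}, every shape of S_r other than the two claimed yields such a circuit: either the
   supports of p and r cross on four vertices, or S_r strictly contains S_p and one compares the
   q-coordinates of b and of two vertices outside S_p. *)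

lemma centered_simplex_dependency_const:
  assumes simplex: "centered_simplex E" and dep: "(\<Sum>e\<in>E. u e *\<^sub>R e) = 0"
    and "e1 \<in> E" "e2 \<in> E"
  shows "u e1 = u e2"
proof -
  have fin: "finite E" and indep: "\<not> affine_dependent E" and barycentre: "(\<Sum>e\<in>E. e) = 0"
    using simplex by (auto simp: centered_simplex_def)
  have "card E > 0" using \<open>e1 \<in> E\<close> fin card_gt_0_iff by blast
  define m where "m = sum u E / card E"
  have "(\<Sum>e\<in>E. u e - m) = 0"
    using \<open>card E > 0\<close> by (simp add: sum_subtractf m_def)
  moreover have "(\<Sum>e\<in>E. (u e - m) *\<^sub>R e) = (\<Sum>e\<in>E. u e *\<^sub>R e) - m *\<^sub>R (\<Sum>e\<in>E. e)"
    by (simp add: scaleR_diff_left sum_subtractf scaleR_right.sum)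
  then have "(\<Sum>e\<in>E. (u e - m) *\<^sub>R e) = 0"
    using dep barycentre by simp
  ultimately have "\<forall>e\<in>E. u e - m = 0"
    using indep affine_dependent_explicit_finite[OF fin] by blast
  then show ?thesis using \<open>e1 \<in> E\<close> \<open>e2 \<in> E\<close> by simp
qed

lemma centered_simplex_coordinates:
  fixes E :: "'a::euclidean_space set"
  assumes simplex: "centered_simplex E"
  obtains l where "\<forall>e\<in>E. 0 \<le> l e" "\<exists>e\<in>E. l e = 0" "x = (\<Sum>e\<in>E. l e *\<^sub>R e)"
proof -
  have fin: "finite E" and indep: "\<not> affine_dependent E" and barycentre: "(\<Sum>e\<in>E. e) = 0"
    and card: "card E = DIM('a) + 1"
    using simplex by (auto simp: centered_simplex_def)
  have "aff_dim E = DIM('a)" using aff_dim_affine_independent[OF indep] card by simp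
  then have "affine hull E = UNIV" using aff_dim_eq_full by blast
  then have "x \<in> affine hull E" by simp
  then obtain u where u: "x = (\<Sum>e\<in>E. u e *\<^sub>R e)"
    unfolding affine_hull_finite[OF fin] by blast
  define l where "l e = u e - Min (u ` E)" for e
  have "E \<noteq> {}" using card by auto
  then have "Min (u ` E) \<in> u ` E" using fin by simp
  then have "\<exists>e\<in>E. l e = 0" by (auto simp: l_def)
  moreover have "\<forall>e\<in>E. 0 \<le> l e" using fin by (simp add: l_def)
  moreover have "(\<Sum>e\<in>E. l e *\<^sub>R e) = x - Min (u ` E) *\<^sub>R (\<Sum>e\<in>E. e)"
    using u by (simp add: l_def scaleR_diff_left sum_subtractf scaleR_right.sum)
  then have "x = (\<Sum>e\<in>E. l e *\<^sub>R e)" using barycentre by simp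
  ultimately show thesis using that by blast
qed

lemma centered_simplex_coordinates_unique:
  assumes simplex: "centered_simplex E" and "(\<Sum>e\<in>E. m e *\<^sub>R e) = (\<Sum>e\<in>E. l e *\<^sub>R e)"
  obtains t where "\<And>e. e \<in> E \<Longrightarrow> m e = l e + t"
proof -
  have "E \<noteq> {}" using simplex by (auto simp: centered_simplex_def)
  then obtain e0 where "e0 \<in> E" by blast
  have relation: "(\<Sum>e\<in>E. (m e - l e) *\<^sub>R e) = 0"
    using assms(2) by (simp add: scaleR_diff_left sum_subtractf)
  have "m e - l e = m e0 - l e0" if "e \<in> E" for e
    by (rule centered_simplex_dependency_const[OF simplex relation that \<open>e0 \<in> E\<close>])
  then show thesis using that[of "m e0 - l e0"] by force
qed

lemma pos_hull_face_iff:
  assumes simplex: "centered_simplex E" and "S \<subseteq> E" and x: "x = (\<Sum>e\<in>E. l e *\<^sub>R e)"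
  shows "x \<in> pos_hull S \<longleftrightarrow> (\<exists>t. \<forall>e\<in>E. 0 \<le> l e + t \<and> (e \<notin> S \<longrightarrow> l e + t = 0))"
proof -
  have fin: "finite E" and barycentre: "(\<Sum>e\<in>E. e) = 0"
    using simplex by (auto simp: centered_simplex_def)
  show ?thesis
  proof
    assume "x \<in> pos_hull S"
    then obtain c where c: "\<forall>a\<in>S. 0 \<le> c a" "x = (\<Sum>a\<in>S. c a *\<^sub>R a)"
      unfolding pos_hull_def by blast
    define c' where "c' e = (if e \<in> S then c e else 0)" for e
    have "(\<Sum>e\<in>E. c' e *\<^sub>R e) = (\<Sum>e\<in>S. c' e *\<^sub>R e)"
      by (rule sum.mono_neutral_right[OF fin \<open>S \<subseteq> E\<close>]) (simp add: c'_def)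
    also have "\<dots> = (\<Sum>e\<in>E. l e *\<^sub>R e)" using c(2) x by (simp add: c'_def)
    finally have "(\<Sum>e\<in>E. c' e *\<^sub>R e) = (\<Sum>e\<in>E. l e *\<^sub>R e)" .
    then obtain t where t: "\<And>e. e \<in> E \<Longrightarrow> c' e = l e + t"
      using centered_simplex_coordinates_unique[OF simplex] by blast
    have "0 \<le> l e + t \<and> (e \<notin> S \<longrightarrow> l e + t = 0)" if "e \<in> E" for e
      using c(1) t[OF that, symmetric] by (auto simp: c'_def)
    then show "\<exists>t. \<forall>e\<in>E. 0 \<le> l e + t \<and> (e \<notin> S \<longrightarrow> l e + t = 0)" by blast
  next
    assume "\<exists>t. \<forall>e\<in>E. 0 \<le> l e + t \<and> (e \<notin> S \<longrightarrow> l e + t = 0)"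
    then obtain t where t: "\<forall>e\<in>E. 0 \<le> l e + t \<and> (e \<notin> S \<longrightarrow> l e + t = 0)" by blast
    have "(\<Sum>e\<in>E. (l e + t) *\<^sub>R e) = x + t *\<^sub>R (\<Sum>e\<in>E. e)"
      using x by (simp add: scaleR_add_left sum.distrib scaleR_right.sum)
    then have "x = (\<Sum>e\<in>E. (l e + t) *\<^sub>R e)" using barycentre by simp
    also have "\<dots> = (\<Sum>e\<in>S. (l e + t) *\<^sub>R e)"
      by (rule sum.mono_neutral_right[OF fin \<open>S \<subseteq> E\<close>]) (use t in simp)
    finally have "x = (\<Sum>e\<in>S. (l e + t) *\<^sub>R e)" .
    moreover have "\<forall>e\<in>S. 0 \<le> l e + t" using t \<open>S \<subseteq> E\<close> by blast
    ultimately show "x \<in> pos_hull S"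
      unfolding pos_hull_def by (intro CollectI exI[of _ "\<lambda>e. l e + t"] conjI) simp_all
  qed
qed

lemma pos_hull_face_iff_positive_coordinates:
  assumes simplex: "centered_simplex E" and "S \<subseteq> E" and x: "x = (\<Sum>e\<in>E. l e *\<^sub>R e)"
    and nonneg: "\<forall>e\<in>E. 0 \<le> l e" and "e0 \<in> E" "l e0 = 0"
  shows "x \<in> pos_hull S \<longleftrightarrow> {e\<in>E. 0 < l e} \<subseteq> S"
proof
  assume "x \<in> pos_hull S"
  then obtain t where t: "\<forall>e\<in>E. 0 \<le> l e + t \<and> (e \<notin> S \<longrightarrow> l e + t = 0)"
    using pos_hull_face_iff[OF simplex \<open>S \<subseteq> E\<close> x] by blast
  then have "0 \<le> t" using \<open>e0 \<in> E\<close> \<open>l e0 = 0\<close> by force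
  then show "{e\<in>E. 0 < l e} \<subseteq> S" using t by force
next
  assume "{e\<in>E. 0 < l e} \<subseteq> S"
  then have "\<forall>e\<in>E. 0 \<le> l e + 0 \<and> (e \<notin> S \<longrightarrow> l e + 0 = 0)"
    using nonneg by force
  then show "x \<in> pos_hull S"
    using pos_hull_face_iff[OF simplex \<open>S \<subseteq> E\<close> x] by blast
qed

lemma support_eq_positive_coordinates:
  assumes simplex: "centered_simplex E" and x: "x = (\<Sum>e\<in>E. l e *\<^sub>R e)"
    and nonneg: "\<forall>e\<in>E. 0 \<le> l e" and zero: "e0 \<in> E" "l e0 = 0"
  shows "support E x = {e\<in>E. 0 < l e}"
  unfolding support_def
proof (rule the_equality)
  let ?S = "{e\<in>E. 0 < l e}"
  have iff: "x \<in> pos_hull S \<longleftrightarrow> ?S \<subseteq> S" if "S \<subseteq> E" for S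
    using pos_hull_face_iff_positive_coordinates[OF simplex that x nonneg zero] .
  have "?S \<subseteq> E" by blast
  then have in_hull: "x \<in> pos_hull ?S" using iff by blast
  have minimal: "x \<notin> pos_hull T" if "T \<subset> ?S" for T
    using that iff[of T] \<open>?S \<subseteq> E\<close> by blast
  show "?S \<subseteq> E \<and> x \<in> pos_hull ?S \<and> (\<forall>T. T \<subset> ?S \<longrightarrow> x \<notin> pos_hull T)"
    using \<open>?S \<subseteq> E\<close> in_hull minimal by blast
  fix S assume S: "S \<subseteq> E \<and> x \<in> pos_hull S \<and> (\<forall>T. T \<subset> S \<longrightarrow> x \<notin> pos_hull T)"
  then have "?S \<subseteq> S" using iff by blast
  then show "S = ?S" using S in_hull by blast
qed

definition simplex_coords :: "'a::real_vector set \<Rightarrow> 'a \<Rightarrow> 'a \<Rightarrow> real" where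
  "simplex_coords E x = (SOME l. (\<forall>e\<in>E. 0 \<le> l e) \<and> (\<exists>e\<in>E. l e = 0) \<and> x = (\<Sum>e\<in>E. l e *\<^sub>R e))"

lemma simplex_coords:
  fixes E :: "'a::euclidean_space set"
  assumes simplex: "centered_simplex E"
  shows "\<forall>e\<in>E. 0 \<le> simplex_coords E x e" "\<exists>e\<in>E. simplex_coords E x e = 0"
    and "x = (\<Sum>e\<in>E. simplex_coords E x e *\<^sub>R e)"
proof -
  obtain l where "\<forall>e\<in>E. 0 \<le> l e" "\<exists>e\<in>E. l e = 0" "x = (\<Sum>e\<in>E. l e *\<^sub>R e)"
    using centered_simplex_coordinates[OF simplex] .
  then have "\<exists>l. (\<forall>e\<in>E. 0 \<le> l e) \<and> (\<exists>e\<in>E. l e = 0) \<and> x = (\<Sum>e\<in>E. l e *\<^sub>R e)" by blast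
  from someI_ex[OF this]
  show "\<forall>e\<in>E. 0 \<le> simplex_coords E x e" "\<exists>e\<in>E. simplex_coords E x e = 0"
    and "x = (\<Sum>e\<in>E. simplex_coords E x e *\<^sub>R e)"
    unfolding simplex_coords_def by blast+
qed

lemma support_eq_simplex_coords:
  fixes E :: "'a::euclidean_space set"
  assumes simplex: "centered_simplex E"
  shows "support E x = {e\<in>E. 0 < simplex_coords E x e}"
proof -
  obtain e0 where "e0 \<in> E" "simplex_coords E x e0 = 0" using simplex_coords(2)[OF simplex] by blast
  then show ?thesis
    by (rule support_eq_positive_coordinates[OF simplex simplex_coords(3,1)[OF simplex]])
qed

lemma simplex_coords_pos:
  fixes E :: "'a::euclidean_space set"
  assumes "centered_simplex E" and "e \<in> support E x"
  shows "0 < simplex_coords E x e"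
  using assms(2) support_eq_simplex_coords[OF assms(1), of x] by blast

lemma simplex_coords_eq_0:
  fixes E :: "'a::euclidean_space set"
  assumes "centered_simplex E" and "e \<in> E" "e \<notin> support E x"
  shows "simplex_coords E x e = 0"
  using assms simplex_coords(1)[OF assms(1), of x] support_eq_simplex_coords[OF assms(1), of x]
  by force

lemma support_psubset:
  fixes E :: "'a::euclidean_space set"
  assumes simplex: "centered_simplex E"
  shows "support E x \<subset> E"
  using simplex_coords(2)[OF simplex, of x] support_eq_simplex_coords[OF simplex, of x] by force

lemma support_subset:
  fixes E :: "'a::euclidean_space set"
  assumes "centered_simplex E"
  shows "support E x \<subseteq> E"
  using support_psubset[OF assms] by blast

lemma support_vertex:
  fixes E :: "'a::euclidean_space set"
  assumes simplex: "centered_simplex E" and "v \<in> E"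
  shows "support E v = {v}"
proof -
  have fin: "finite E" and "card E = DIM('a) + 1" using simplex by (auto simp: centered_simplex_def)
  then have "card (E - {v}) > 0" using \<open>v \<in> E\<close> by simp
  then obtain w where "w \<in> E" "w \<noteq> v" by (metis Diff_iff card_gt_0_iff ex_in_conv singletonI)
  define l where "l e = (if e = v then 1 else 0 :: real)" for e
  have "(\<Sum>e\<in>E. l e *\<^sub>R e) = (\<Sum>e\<in>E. if e = v then e else 0)"
    by (rule sum.cong) (auto simp: l_def)
  also have "\<dots> = v" using fin \<open>v \<in> E\<close> by simp
  finally have "support E v = {e\<in>E. 0 < l e}"
    by (rule support_eq_positive_coordinates[OF simplex sym _ \<open>w \<in> E\<close>])
      (use \<open>w \<noteq> v\<close> in \<open>simp_all add: l_def\<close>)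
  then show ?thesis using \<open>v \<in> E\<close> by (auto simp: l_def)
qed

lemma notin_simplex_if_two_in_support:
  fixes E :: "'a::euclidean_space set"
  assumes simplex: "centered_simplex E" and "u \<in> support E x" "v \<in> support E x" "u \<noteq> v"
  shows "x \<notin> E"
proof
  assume "x \<in> E"
  then show False using assms support_vertex[OF simplex \<open>x \<in> E\<close>] by simp
qed

lemma card_ge_2_obtain_other:
  assumes "2 \<le> card S"
  obtains y where "y \<in> S" "y \<noteq> x"
proof -
  have "\<not> S \<subseteq> {x}"
  proof
    assume "S \<subseteq> {x}"
    then have "card S \<le> card {x}" by (intro card_mono) auto
    then show False using assms by simp
  qed
  then show thesis using that by blast
qed

lemma edge_meeting_facet_in_one_vertexE:
  assumes "finite E" "S \<subseteq> E" "T \<subseteq> E"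
    and "card S = 2" "card E = card T + 1" "card (S \<inter> T) = 1"
  obtains b c where "S = {b, c}" "b \<noteq> c" "T = E - {c}"
proof -
  have "card (E - T) = card E - card T"
    using card_Diff_subset finite_subset[OF \<open>T \<subseteq> E\<close> \<open>finite E\<close>] \<open>T \<subseteq> E\<close> by blast
  then have "card (E - T) = 1" using \<open>card E = card T + 1\<close> by simp
  then obtain c where "E - T = {c}" by (rule card_1_singletonE)
  then have T: "T = E - {c}" using \<open>T \<subseteq> E\<close> by blast
  have "c \<in> S"
  proof (rule ccontr)
    assume "c \<notin> S"
    then have "S \<inter> T = S" using T \<open>S \<subseteq> E\<close> by blast
    then show False using \<open>card S = 2\<close> \<open>card (S \<inter> T) = 1\<close> by simp
  qed
  then have "card (S - {c}) = 1" using \<open>card S = 2\<close> by simp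
  then obtain b where "S - {c} = {b}" by (rule card_1_singletonE)
  then have "S = {b, c}" "b \<noteq> c" using \<open>c \<in> S\<close> by auto
  then show thesis using that T by blast
qed

lemma two_signed_circuit_relation_eq_0:
  fixes A :: "'a::real_vector set" and \<gamma> :: "'a \<Rightarrow> real"
  assumes circuit: "\<And>c. (\<Sum>a\<in>A. c a *\<^sub>R a) = 0 \<Longrightarrow> \<exists>s. \<forall>a\<in>A. c a = s * \<gamma> a"
    and pos: "a1 \<in> A" "a2 \<in> A" "a1 \<noteq> a2" "0 < \<gamma> a1" "0 < \<gamma> a2"
    and neg: "a3 \<in> A" "a4 \<in> A" "a3 \<noteq> a4" "\<gamma> a3 < 0" "\<gamma> a4 < 0"
    and relation: "(\<Sum>a\<in>A. c a *\<^sub>R a) = 0" and nonneg: "\<forall>a\<in>A - {b}. 0 \<le> c a"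
  shows "\<forall>a\<in>A. c a = 0"
proof -
  obtain s where s: "\<forall>a\<in>A. c a = s * \<gamma> a" using circuit[OF relation] by blast
  have "\<not> 0 < s"
  proof
    assume "0 < s"
    then have "c a3 < 0" "c a4 < 0" using s neg by (simp_all add: mult_pos_neg)
    moreover have "a3 \<in> A - {b} \<or> a4 \<in> A - {b}" using neg(1-3) by blast
    ultimately show False using nonneg by (meson not_le)
  qed
  moreover have "\<not> s < 0"
  proof
    assume "s < 0"
    then have "c a1 < 0" "c a2 < 0" using s pos by (simp_all add: mult_neg_pos)
    moreover have "a1 \<in> A - {b} \<or> a2 \<in> A - {b}" using pos(1-3) by blast
    ultimately show False using nonneg by (meson not_le)
  qed
  ultimately show ?thesis using s by simp
qed

lemma conical_position_if_two_signed_circuit: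
  fixes A :: "'a::real_vector set" and \<gamma> :: "'a \<Rightarrow> real"
  assumes "finite A"
    and circuit: "\<And>c. (\<Sum>a\<in>A. c a *\<^sub>R a) = 0 \<Longrightarrow> \<exists>s. \<forall>a\<in>A. c a = s * \<gamma> a"
    and pos: "a1 \<in> A" "a2 \<in> A" "a1 \<noteq> a2" "0 < \<gamma> a1" "0 < \<gamma> a2"
    and neg: "a3 \<in> A" "a4 \<in> A" "a3 \<noteq> a4" "\<gamma> a3 < 0" "\<gamma> a4 < 0"
  shows "conical_position A"
proof -
  have relation_eq_0: "\<forall>a\<in>A. c a = 0"
    if "(\<Sum>a\<in>A. c a *\<^sub>R a) = 0" "\<forall>a\<in>A - {b}. 0 \<le> c a" for c b
    by (rule two_signed_circuit_relation_eq_0[OF _ pos neg that]) (fact circuit)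
  show ?thesis
    unfolding conical_position_def
  proof (intro conjI ballI notI)
    assume "0 \<in> convex hull A"
    then obtain u where u: "\<forall>a\<in>A. 0 \<le> u a" "sum u A = 1" "(\<Sum>a\<in>A. u a *\<^sub>R a) = 0"
      using convex_hull_finite[OF \<open>finite A\<close>] by auto
    have "\<forall>a\<in>A. u a = 0" using relation_eq_0[OF u(3)] u(1) by blast
    then show False using u(2) by simp
  next
    fix a assume "a \<in> A" "a \<in> pos_hull (A - {a})"
    then obtain c where c: "\<forall>b\<in>A - {a}. 0 \<le> c b" "a = (\<Sum>b\<in>A - {a}. c b *\<^sub>R b)"
      unfolding pos_hull_def by blast
    define d where "d b = (if b = a then -1 else c b)" for b
    have "(\<Sum>b\<in>A. d b *\<^sub>R b) = d a *\<^sub>R a + (\<Sum>b\<in>A - {a}. d b *\<^sub>R b)"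
      by (rule sum.remove[OF \<open>finite A\<close> \<open>a \<in> A\<close>])
    also have "(\<Sum>b\<in>A - {a}. d b *\<^sub>R b) = (\<Sum>b\<in>A - {a}. c b *\<^sub>R b)"
      by (rule sum.cong) (simp_all add: d_def)
    also have "\<dots> = a" by (rule sym[OF c(2)])
    finally have "(\<Sum>b\<in>A. d b *\<^sub>R b) = 0" by (simp add: d_def)
    moreover have "\<forall>b\<in>A - {a}. 0 \<le> d b" using c(1) by (simp add: d_def)
    ultimately have "d a = 0" using relation_eq_0 \<open>a \<in> A\<close> by blast
    then show False by (simp add: d_def)
  qed
qed

lemma centered_simplex_exchange_dependency:
  fixes E :: "'a::euclidean_space set"
  assumes simplex: "centered_simplex E" and "finite Y" "Y \<inter> E = {}"
    and coords: "\<And>y. y \<in> Y \<Longrightarrow> y = (\<Sum>e\<in>E. l y e *\<^sub>R e)"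
    and dep: "(\<Sum>a\<in>Y \<union> (E - F). c a *\<^sub>R a) = 0"
    and "g \<in> E" "h \<in> E"
  shows "(\<Sum>y\<in>Y. c y * l y g) + (if g \<in> F then 0 else c g)
       = (\<Sum>y\<in>Y. c y * l y h) + (if h \<in> F then 0 else c h)"
proof -
  have fin: "finite E" using simplex by (simp add: centered_simplex_def)
  have "c y *\<^sub>R y = (\<Sum>e\<in>E. (c y * l y e) *\<^sub>R e)" if "y \<in> Y" for y
  proof -
    have "c y *\<^sub>R y = c y *\<^sub>R (\<Sum>e\<in>E. l y e *\<^sub>R e)" using coords[OF that] by (rule arg_cong)
    then show ?thesis by (simp add: scaleR_sum_right)
  qed
  then have "(\<Sum>y\<in>Y. c y *\<^sub>R y) = (\<Sum>y\<in>Y. \<Sum>e\<in>E. (c y * l y e) *\<^sub>R e)"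
    by (rule sum.cong[OF refl])
  also have "\<dots> = (\<Sum>e\<in>E. (\<Sum>y\<in>Y. c y * l y e) *\<^sub>R e)"
    by (subst sum.swap) (simp add: scaleR_sum_left)
  finally have lifted: "(\<Sum>y\<in>Y. c y *\<^sub>R y) = (\<Sum>e\<in>E. (\<Sum>y\<in>Y. c y * l y e) *\<^sub>R e)" .
  have "(\<Sum>a\<in>E - F. c a *\<^sub>R a) = (\<Sum>e\<in>E. (if e \<in> F then 0 else c e) *\<^sub>R e)"
    by (rule sum.mono_neutral_cong_left) (use fin in auto)
  moreover have "(\<Sum>a\<in>Y \<union> (E - F). c a *\<^sub>R a) = (\<Sum>y\<in>Y. c y *\<^sub>R y) + (\<Sum>a\<in>E - F. c a *\<^sub>R a)"
    using \<open>finite Y\<close> fin \<open>Y \<inter> E = {}\<close> by (intro sum.union_disjoint) auto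
  ultimately have "(\<Sum>e\<in>E. ((\<Sum>y\<in>Y. c y * l y e) + (if e \<in> F then 0 else c e)) *\<^sub>R e) = 0"
    using dep lifted by (simp add: scaleR_add_left sum.distrib)
  from centered_simplex_dependency_const[OF simplex this \<open>g \<in> E\<close> \<open>h \<in> E\<close>] show ?thesis .
qed

lemma single_exchange_circuit:
  fixes E :: "'a::euclidean_space set"
  assumes simplex: "centered_simplex E" and "x \<notin> E" and x: "x = (\<Sum>g\<in>E. l g *\<^sub>R g)"
    and "e \<in> E" and dep: "(\<Sum>a\<in>insert x (E - {e}). c a *\<^sub>R a) = 0"
    and "a \<in> insert x (E - {e})"
  shows "c a = c x * (if a = x then 1 else l e - l a)"
proof (cases "a = x")
  case False
  then have "a \<in> E" using assms by blast
  have "(\<Sum>y\<in>{x}. c y * l a) + (if a \<in> {e} then 0 else c a)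
      = (\<Sum>y\<in>{x}. c y * l e) + (if e \<in> {e} then 0 else c e)"
    by (rule centered_simplex_exchange_dependency[where l = "\<lambda>_. l"])
      (use simplex \<open>x \<notin> E\<close> x dep \<open>a \<in> E\<close> \<open>e \<in> E\<close> in simp_all)
  then show ?thesis using False \<open>a \<in> insert x (E - {e})\<close> by (simp add: algebra_simps)
qed simp

lemma orthogonal_pair_scaledE:
  fixes a b u v :: real
  assumes "a * u + b * v = 0" and "u \<noteq> 0 \<or> v \<noteq> 0"
  obtains s where "a = s * v" "b = - (s * u)"
proof (cases "v = 0")
  case True
  then show thesis using assms by (intro that[of "- b / u"]) auto
next
  case False
  then show thesis using assms(1) by (intro that[of "a / v"]) (auto simp: field_simps)
qed

(* Eliminating e and f between the coordinate expressions of x and y gives the linear relation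
   among x, y and E - {e, f}; its value vanishes at e and f. *)
definition pair_exchange_circuit ::
    "'a \<Rightarrow> 'a \<Rightarrow> ('a \<Rightarrow> real) \<Rightarrow> ('a \<Rightarrow> real) \<Rightarrow> 'a \<Rightarrow> 'a \<Rightarrow> 'a \<Rightarrow> real" where
  "pair_exchange_circuit x y lx ly e f z =
     (if z = x then ly e - ly f
      else if z = y then lx f - lx e
      else (ly e - ly f) * (lx e - lx z) - (lx e - lx f) * (ly e - ly z))"

lemma pair_exchange_circuit:
  fixes E :: "'a::euclidean_space set"
  assumes simplex: "centered_simplex E" and "x \<notin> E" "y \<notin> E" "x \<noteq> y"
    and x: "x = (\<Sum>g\<in>E. lx g *\<^sub>R g)" and y: "y = (\<Sum>g\<in>E. ly g *\<^sub>R g)"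
    and "e \<in> E" "f \<in> E" "e \<noteq> f" and nondegenerate: "lx e \<noteq> lx f \<or> ly e \<noteq> ly f"
    and dep: "(\<Sum>a\<in>insert x (insert y (E - {e, f})). c a *\<^sub>R a) = 0"
  shows "\<exists>s. \<forall>a\<in>insert x (insert y (E - {e, f})). c a = s * pair_exchange_circuit x y lx ly e f a"
proof -
  have coords: "z = (\<Sum>g\<in>E. (if z = x then lx else ly) g *\<^sub>R g)" if "z \<in> {x, y}" for z
    using that x y by auto
  have dep': "(\<Sum>a\<in>{x, y} \<union> (E - {e, f}). c a *\<^sub>R a) = 0" using dep by simp
  have lifted: "c x * lx g + c y * ly g + (if g \<in> {e, f} then 0 else c g)
              = c x * lx e + c y * ly e" if "g \<in> E" for g
  proof -
    have "(\<Sum>z\<in>{x, y}. c z * (if z = x then lx else ly) g) + (if g \<in> {e, f} then 0 else c g)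
        = (\<Sum>z\<in>{x, y}. c z * (if z = x then lx else ly) e) + (if e \<in> {e, f} then 0 else c e)"
      by (rule centered_simplex_exchange_dependency[OF simplex _ _ coords dep' that \<open>e \<in> E\<close>])
        (use \<open>x \<notin> E\<close> \<open>y \<notin> E\<close> in auto)
    then show ?thesis using \<open>x \<noteq> y\<close> by simp
  qed
  from lifted[OF \<open>f \<in> E\<close>]
  have balance: "c x * (lx e - lx f) + c y * (ly e - ly f) = 0" by (simp add: algebra_simps)
  obtain s where cx: "c x = s * (ly e - ly f)" and "c y = - (s * (lx e - lx f))"
    by (rule orthogonal_pair_scaledE[OF balance]) (use nondegenerate in auto)
  then have cy: "c y = s * (lx f - lx e)" by (simp add: algebra_simps)
  have "c z = s * pair_exchange_circuit x y lx ly e f z" if "z \<in> E - {e, f}" for z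
  proof -
    have "c z = c x * (lx e - lx z) + c y * (ly e - ly z)"
      using lifted[of z] that by (simp add: algebra_simps)
    then show ?thesis
      using that \<open>x \<notin> E\<close> \<open>y \<notin> E\<close> unfolding cx cy pair_exchange_circuit_def
      by (auto simp: algebra_simps)
  qed
  then show ?thesis
    using cx cy \<open>x \<noteq> y\<close> by (intro exI[of _ s]) (auto simp: pair_exchange_circuit_def)
qed

locale centered_configuration =
  fixes E X :: "'a::euclidean_space set"
  assumes simplex: "centered_simplex E"
    and simplex_subset: "E \<subseteq> X"
    and good: "\<And>A. A \<subseteq> X \<Longrightarrow> card A = DIM('a) + 1 \<Longrightarrow> good_position A"
begin

lemma finite_simplex: "finite E" and card_simplex: "card E = DIM('a) + 1"
  using simplex by (auto simp: centered_simplex_def)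

abbreviation coord :: "'a \<Rightarrow> 'a \<Rightarrow> real" where
  "coord \<equiv> simplex_coords E"

lemma coord_sum: "x = (\<Sum>e\<in>E. coord x e *\<^sub>R e)"
  by (rule simplex_coords(3)[OF simplex])

lemma coord_nonneg: "e \<in> E \<Longrightarrow> 0 \<le> coord x e"
  using simplex_coords(1)[OF simplex] by blast

lemma coord_pos: "e \<in> support E x \<Longrightarrow> 0 < coord x e"
  by (rule simplex_coords_pos[OF simplex])

lemma coord_eq_0: "e \<in> E \<Longrightarrow> e \<notin> support E x \<Longrightarrow> coord x e = 0"
  by (rule simplex_coords_eq_0[OF simplex])

lemma two_signed_circuit_impossible:
  fixes \<gamma> :: "'a \<Rightarrow> real"
  assumes "A \<subseteq> X" and card: "card A = DIM('a) + 1"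
    and circuit: "\<And>c. (\<Sum>a\<in>A. c a *\<^sub>R a) = 0 \<Longrightarrow> \<exists>s. \<forall>a\<in>A. c a = s * \<gamma> a"
    and "a1 \<in> A" "a2 \<in> A" "a1 \<noteq> a2" "0 < \<gamma> a1" "0 < \<gamma> a2"
    and "a3 \<in> A" "a4 \<in> A" "a3 \<noteq> a4" "\<gamma> a3 < 0" "\<gamma> a4 < 0"
  shows False
proof -
  have "finite A" using card by (metis card.infinite add_is_0 one_neq_zero)
  have "conical_position A"
    using conical_position_if_two_signed_circuit[OF \<open>finite A\<close> circuit assms(4-13)] .
  then show False using good[OF \<open>A \<subseteq> X\<close> card] by (simp add: good_position_def)
qed

lemma single_exchange_impossible:
  assumes "x \<in> X" "x \<notin> E" and x: "x = (\<Sum>g\<in>E. l g *\<^sub>R g)"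
    and "e \<in> E" "f \<in> E" "l f < l e"
    and "z1 \<in> E" "z2 \<in> E" "z1 \<noteq> z2" "l e < l z1" "l e < l z2"
  shows False
proof -
  let ?A = "insert x (E - {e})"
  let ?\<gamma> = "\<lambda>a. if a = x then 1 else l e - l a"
  have "?A \<subseteq> X" using \<open>x \<in> X\<close> simplex_subset by blast
  moreover have "card ?A = DIM('a) + 1"
    using \<open>x \<notin> E\<close> \<open>e \<in> E\<close> finite_simplex card_simplex by (simp add: card_Diff_singleton)
  moreover have "\<exists>s. \<forall>a\<in>?A. c a = s * ?\<gamma> a" if "(\<Sum>a\<in>?A. c a *\<^sub>R a) = 0" for c
    using single_exchange_circuit[OF simplex \<open>x \<notin> E\<close> x \<open>e \<in> E\<close> that] by blast
  moreover have "x \<in> ?A" "f \<in> ?A" "x \<noteq> f" "0 < ?\<gamma> x" "0 < ?\<gamma> f"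
    using assms by auto
  moreover have "z1 \<in> ?A" "z2 \<in> ?A" "z1 \<noteq> z2" "?\<gamma> z1 < 0" "?\<gamma> z2 < 0"
    using assms by auto
  ultimately show False by (rule two_signed_circuit_impossible)
qed

lemma pair_exchange_impossible:
  assumes "x \<in> X" "y \<in> X" "x \<notin> E" "y \<notin> E" "x \<noteq> y"
    and x: "x = (\<Sum>g\<in>E. lx g *\<^sub>R g)" and y: "y = (\<Sum>g\<in>E. ly g *\<^sub>R g)"
    and "e \<in> E" "f \<in> E" "e \<noteq> f" and nondegenerate: "lx e \<noteq> lx f \<or> ly e \<noteq> ly f"
    and members: "{a1, a2, a3, a4} \<subseteq> insert x (insert y (E - {e, f}))" and "a1 \<noteq> a2" "a3 \<noteq> a4"
    and signs: "0 < pair_exchange_circuit x y lx ly e f a1" "0 < pair_exchange_circuit x y lx ly e f a2"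
      "pair_exchange_circuit x y lx ly e f a3 < 0" "pair_exchange_circuit x y lx ly e f a4 < 0"
  shows False
proof -
  let ?A = "insert x (insert y (E - {e, f}))"
  have "?A \<subseteq> X" using \<open>x \<in> X\<close> \<open>y \<in> X\<close> simplex_subset by blast
  moreover have "card ?A = DIM('a) + 1"
    using assms(3-5) \<open>e \<in> E\<close> \<open>f \<in> E\<close> \<open>e \<noteq> f\<close> finite_simplex card_simplex
    by (simp add: card_Diff_subset)
  moreover note pair_exchange_circuit[OF simplex assms(3-5) x y \<open>e \<in> E\<close> \<open>f \<in> E\<close> \<open>e \<noteq> f\<close> nondegenerate]
  moreover have "a1 \<in> ?A" "a2 \<in> ?A" using members by auto
  moreover note \<open>a1 \<noteq> a2\<close> signs(1,2)
  moreover have "a3 \<in> ?A" "a4 \<in> ?A" using members by auto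
  moreover note \<open>a3 \<noteq> a4\<close> signs(3,4)
  ultimately show False by (rule two_signed_circuit_impossible)
qed

lemma pair_exchange_common_minimum_impossible:
  assumes "x \<in> X" "y \<in> X" "x \<notin> E" "y \<notin> E" "x \<noteq> y"
    and x: "x = (\<Sum>g\<in>E. lx g *\<^sub>R g)" and y: "y = (\<Sum>g\<in>E. ly g *\<^sub>R g)"
    and "e \<in> E" "f \<in> E" "lx e < lx f" "ly f < ly e"
    and "z1 \<in> E" "z2 \<in> E" "z1 \<noteq> z2"
    and above1: "lx e \<le> lx z1" "ly e \<le> ly z1" "lx e < lx z1 \<or> ly e < ly z1"
    and above2: "lx e \<le> lx z2" "ly e \<le> ly z2" "lx e < lx z2 \<or> ly e < ly z2"
  shows False
proof -
  let ?\<gamma> = "pair_exchange_circuit x y lx ly e f"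
  have negative: "?\<gamma> z < 0"
    if "z \<in> E" "lx e \<le> lx z" "ly e \<le> ly z" "lx e < lx z \<or> ly e < ly z" for z
  proof -
    have "z \<noteq> x" "z \<noteq> y" using that \<open>x \<notin> E\<close> \<open>y \<notin> E\<close> by auto
    then have "?\<gamma> z = - ((ly e - ly f) * (lx z - lx e) + (lx f - lx e) * (ly z - ly e))"
      by (simp add: pair_exchange_circuit_def algebra_simps)
    moreover have "0 \<le> (ly e - ly f) * (lx z - lx e)" "0 \<le> (lx f - lx e) * (ly z - ly e)"
      using that \<open>lx e < lx f\<close> \<open>ly f < ly e\<close> by simp_all
    moreover have "0 < (ly e - ly f) * (lx z - lx e) \<or> 0 < (lx f - lx e) * (ly z - ly e)"
      using that(4) \<open>lx e < lx f\<close> \<open>ly f < ly e\<close> by auto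
    ultimately show ?thesis by linarith
  qed
  show False
  proof (rule pair_exchange_impossible[OF assms(1-5) x y \<open>e \<in> E\<close> \<open>f \<in> E\<close>])
    show "e \<noteq> f" "lx e \<noteq> lx f \<or> ly e \<noteq> ly f" using \<open>lx e < lx f\<close> by auto
    show "{x, y, z1, z2} \<subseteq> insert x (insert y (E - {e, f}))"
      using \<open>z1 \<in> E\<close> \<open>z2 \<in> E\<close> above1 above2 \<open>ly f < ly e\<close> by auto
    show "0 < ?\<gamma> x" "0 < ?\<gamma> y"
      using \<open>x \<noteq> y\<close> \<open>lx e < lx f\<close> \<open>ly f < ly e\<close> by (simp_all add: pair_exchange_circuit_def)
    show "?\<gamma> z1 < 0" "?\<gamma> z2 < 0"
      using negative \<open>z1 \<in> E\<close> \<open>z2 \<in> E\<close> above1 above2 by blast+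
  qed fact+
qed

lemma crossing_supports_impossible:
  assumes "x \<in> X" "y \<in> X" "w0 \<in> E"
    and x_support: "u \<in> support E x" "v \<in> support E x" "w0 \<notin> support E x" "w1 \<notin> support E x"
    and y_support: "u \<in> support E y" "w1 \<in> support E y" "v \<notin> support E y" "w0 \<notin> support E y"
  shows False
proof -
  have "u \<in> E" "v \<in> E" "w1 \<in> E"
    using x_support(1,2) y_support(2) support_subset[OF simplex] by blast+
  have "0 < coord x u" "0 < coord x v" "coord x w0 = 0" "coord x w1 = 0"
    using x_support \<open>w0 \<in> E\<close> \<open>w1 \<in> E\<close> by (simp_all add: coord_pos coord_eq_0)
  have "0 < coord y u" "0 < coord y w1" "coord y v = 0" "coord y w0 = 0"
    using y_support \<open>v \<in> E\<close> \<open>w0 \<in> E\<close> by (simp_all add: coord_pos coord_eq_0)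
  have "u \<noteq> v" "u \<noteq> w1" using x_support y_support by blast+
  then have "x \<notin> E" "y \<notin> E"
    using notin_simplex_if_two_in_support[OF simplex] x_support(1,2) y_support(1,2) by blast+
  have "x \<noteq> y" using x_support(2) y_support(3) by blast
  let ?\<gamma> = "pair_exchange_circuit x y (coord x) (coord y) u w0"
  show False
  proof (rule pair_exchange_impossible[OF \<open>x \<in> X\<close> \<open>y \<in> X\<close> \<open>x \<notin> E\<close> \<open>y \<notin> E\<close> \<open>x \<noteq> y\<close>
        coord_sum coord_sum \<open>u \<in> E\<close> \<open>w0 \<in> E\<close>])
    show "u \<noteq> w0" "coord x u \<noteq> coord x w0 \<or> coord y u \<noteq> coord y w0"
      using \<open>0 < coord x u\<close> \<open>coord x w0 = 0\<close> by auto
    show "{x, w1, y, v} \<subseteq> insert x (insert y (E - {u, w0}))"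
      using \<open>v \<in> E\<close> \<open>w1 \<in> E\<close> x_support y_support by auto
    show "x \<noteq> w1" "y \<noteq> v" using \<open>x \<notin> E\<close> \<open>y \<notin> E\<close> \<open>v \<in> E\<close> \<open>w1 \<in> E\<close> by auto
    have "?\<gamma> w1 = coord x u * coord y w1" "?\<gamma> v = - (coord y u * coord x v)"
      using \<open>x \<notin> E\<close> \<open>y \<notin> E\<close> \<open>v \<in> E\<close> \<open>w1 \<in> E\<close> \<open>coord x w0 = 0\<close> \<open>coord x w1 = 0\<close>
        \<open>coord y v = 0\<close> \<open>coord y w0 = 0\<close>
      by (auto simp: pair_exchange_circuit_def algebra_simps)
    then show "0 < ?\<gamma> w1" "?\<gamma> v < 0"
      using \<open>0 < coord x u\<close> \<open>0 < coord x v\<close> \<open>0 < coord y u\<close> \<open>0 < coord y w1\<close> by simp_all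
    show "0 < ?\<gamma> x" "?\<gamma> y < 0"
      using \<open>x \<noteq> y\<close> \<open>0 < coord x u\<close> \<open>0 < coord y u\<close> \<open>coord x w0 = 0\<close> \<open>coord y w0 = 0\<close>
      by (simp_all add: pair_exchange_circuit_def)
  qed
qed

lemma support_psupset_edge_impossible:
  assumes "p \<in> X" "q \<in> X" "r \<in> X"
    and p_support: "support E p = {b, c}" "b \<noteq> c" and q_support: "support E q = E - {c}"
    and r_support: "{b, c, g1} \<subseteq> support E r" "g0 \<notin> support E r" and "g0 \<in> E" "g1 \<notin> {b, c}"
  shows False
proof -
  have "b \<in> E" "c \<in> E" "g1 \<in> E" using r_support support_subset[OF simplex] by blast+
  have "g0 \<noteq> b" "g0 \<noteq> c" "g0 \<noteq> g1" "g1 \<noteq> b" "g1 \<noteq> c" using r_support \<open>g1 \<notin> {b, c}\<close> by auto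
  note coords = coord_nonneg coord_pos coord_eq_0 p_support q_support r_support \<open>b \<noteq> c\<close> \<open>g0 \<in> E\<close>
    \<open>b \<in> E\<close> \<open>c \<in> E\<close> \<open>g1 \<in> E\<close> \<open>g0 \<noteq> b\<close> \<open>g0 \<noteq> c\<close> \<open>g1 \<noteq> b\<close> \<open>g1 \<noteq> c\<close>
  have "p \<notin> E" "q \<notin> E" "r \<notin> E"
    using notin_simplex_if_two_in_support[OF simplex] p_support q_support r_support
      \<open>b \<in> E\<close> \<open>g1 \<in> E\<close> \<open>b \<noteq> c\<close> \<open>g1 \<notin> {b, c}\<close> by (metis insert_iff insert_subset Diff_iff singletonD)+
  have "p \<noteq> q" "r \<noteq> q" using p_support q_support r_support by auto
  (* Which of b, g0, g1 minimises the q-coordinate decides which exchanged set is conical. *)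
  consider "coord q b < coord q g0" "coord q b < coord q g1"
    | "coord q g1 < coord q g0" "coord q g1 \<le> coord q b"
    | "coord q g0 \<le> coord q g1" "coord q g0 \<le> coord q b"
    by linarith
  then show False
  proof cases
    case 1
    show False
      by (rule single_exchange_impossible[OF \<open>q \<in> X\<close> \<open>q \<notin> E\<close> coord_sum \<open>b \<in> E\<close> \<open>c \<in> E\<close> _
            \<open>g0 \<in> E\<close> \<open>g1 \<in> E\<close> \<open>g0 \<noteq> g1\<close>])
        (use 1 coords in simp_all)
  next
    case 2
    show False
      by (rule pair_exchange_common_minimum_impossible[OF \<open>p \<in> X\<close> \<open>q \<in> X\<close> \<open>p \<notin> E\<close> \<open>q \<notin> E\<close>
            \<open>p \<noteq> q\<close> coord_sum coord_sum \<open>g1 \<in> E\<close> \<open>c \<in> E\<close> _ _ \<open>g0 \<in> E\<close> \<open>b \<in> E\<close> \<open>g0 \<noteq> b\<close>])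
        (use 2 coords in simp_all)
  next
    case 3
    show False
      by (rule pair_exchange_common_minimum_impossible[OF \<open>r \<in> X\<close> \<open>q \<in> X\<close> \<open>r \<notin> E\<close> \<open>q \<notin> E\<close>
            \<open>r \<noteq> q\<close> coord_sum coord_sum \<open>g0 \<in> E\<close> \<open>c \<in> E\<close> _ _ \<open>b \<in> E\<close> \<open>g1 \<in> E\<close> \<open>g1 \<noteq> b\<close>[symmetric]])
        (use 3 coords in simp_all)
  qed
qed

lemma shared_vertex_notin_support:
  assumes "p \<in> X" "q \<in> X" "r \<in> X"
    and p_support: "support E p = {b, c}" "b \<noteq> c" and q_support: "support E q = E - {c}"
    and "support E r \<noteq> {b, c}" "support E r \<noteq> E - {c}" "2 \<le> card (support E r)"
  shows "b \<notin> support E r"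
proof
  assume "b \<in> support E r"
  show False
  proof (cases "c \<in> support E r")
    case True
    then obtain g1 where "g1 \<in> support E r" "g1 \<notin> {b, c}"
      using \<open>b \<in> support E r\<close> \<open>support E r \<noteq> {b, c}\<close> by blast
    obtain g0 where "g0 \<in> E" "g0 \<notin> support E r" using support_psubset[OF simplex] by blast
    show False
      by (rule support_psupset_edge_impossible[OF assms(1-6) _ \<open>g0 \<notin> support E r\<close> \<open>g0 \<in> E\<close>
            \<open>g1 \<notin> {b, c}\<close>])
        (use True \<open>b \<in> support E r\<close> \<open>g1 \<in> support E r\<close> in blast)
  next
    case False
    have "support E r \<subset> E - {c}"
      using False support_subset[OF simplex] \<open>support E r \<noteq> E - {c}\<close> by blast
    then obtain g0 where "g0 \<in> E" "g0 \<noteq> c" "g0 \<notin> support E r" by blast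
    obtain g1 where "g1 \<in> support E r" "g1 \<noteq> b"
      by (rule card_ge_2_obtain_other[OF \<open>2 \<le> card (support E r)\<close>])
    show False
      by (rule crossing_supports_impossible[OF \<open>p \<in> X\<close> \<open>r \<in> X\<close> \<open>g0 \<in> E\<close>, of b c g1])
        (use p_support \<open>b \<in> support E r\<close> \<open>g1 \<in> support E r\<close> False \<open>g0 \<notin> support E r\<close>
           \<open>g0 \<noteq> c\<close> \<open>g1 \<noteq> b\<close> in auto)
  qed
qed

lemma support_eq_simplex_minus_vertex:
  assumes "p \<in> X" "r \<in> X"
    and p_support: "support E p = {b, c}"
    and "c \<in> support E r" "b \<notin> support E r" "2 \<le> card (support E r)"
  shows "support E r = E - {b}"
proof -
  obtain g1 where "g1 \<in> support E r" "g1 \<noteq> c"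
    by (rule card_ge_2_obtain_other[OF \<open>2 \<le> card (support E r)\<close>])
  have "g0 \<in> support E r" if "g0 \<in> E" "g0 \<noteq> b" for g0
  proof (rule ccontr)
    assume "g0 \<notin> support E r"
    show False
      by (rule crossing_supports_impossible[OF \<open>p \<in> X\<close> \<open>r \<in> X\<close> \<open>g0 \<in> E\<close>, of c b g1])
        (use assms that \<open>g0 \<notin> support E r\<close> \<open>g1 \<in> support E r\<close> \<open>g1 \<noteq> c\<close> in auto)
  qed
  then show ?thesis using \<open>b \<notin> support E r\<close> support_subset[OF simplex] by blast
qed

end

theorem proposition6p10:
  fixes E X :: "'a::euclidean_space set" and p q r :: 'a
  assumes "centered_simplex E"
    and "finite X" and "0 \<notin> X" and "E \<subseteq> X"
    and "\<forall>x\<in>X. \<forall>y\<in>X. \<forall>c::real. c > 0 \<and> y = c *\<^sub>R x \<longrightarrow> y = x"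
    and "\<forall>A\<subseteq>X. card A = DIM('a) + 1 \<longrightarrow> good_position A"
    and "p \<in> X" and "q \<in> X"
    and "card (support E p \<inter> support E q) = 1"
    and "card (support E p) = 2" and "card (support E q) = DIM('a)"
    and "r \<in> X" and "support E r \<noteq> support E p" and "support E r \<noteq> support E q"
    and "card (support E r) \<ge> 2"
  shows "support E r \<subseteq> support E q - support E p \<or>
         support E r = (support E p - support E q) \<union> (support E q - support E p)"
proof -
  interpret centered_configuration E X
    by unfold_locales (use assms(1,4,6) in simp_all)
  obtain b c where p_support: "support E p = {b, c}" and "b \<noteq> c" and q_support: "support E q = E - {c}"
    by (rule edge_meeting_facet_in_one_vertexE[OF finite_simplex support_subset[OF simplex]
          support_subset[OF simplex] assms(10) _ assms(9)]) (use assms(11) card_simplex in simp)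
  have "b \<notin> support E r"
    by (rule shared_vertex_notin_support[OF assms(7,8,12) p_support \<open>b \<noteq> c\<close> q_support])
      (use assms(13-15) p_support q_support in simp_all)
  have "b \<in> E" "c \<in> E" "support E r \<subseteq> E" using p_support support_subset[OF simplex] by blast+
  show ?thesis
  proof (cases "c \<in> support E r")
    case True
    have "support E r = E - {b}"
      by (rule support_eq_simplex_minus_vertex[OF assms(7,12) p_support True \<open>b \<notin> support E r\<close> assms(15)])
    moreover have "(support E p - support E q) \<union> (support E q - support E p) = E - {b}"
      unfolding p_support q_support using \<open>b \<in> E\<close> \<open>c \<in> E\<close> \<open>b \<noteq> c\<close> by blast
    ultimately show ?thesis by (intro disjI2) simp
  next
    case False
    then have "support E r \<subseteq> support E q - support E p"
      unfolding p_support q_support using \<open>support E r \<subseteq> E\<close> \<open>b \<notin> support E r\<close> by blast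
    then show ?thesis by (rule disjI1)
  qed
qed

end
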